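(* Let $\varepsilon>0$, $\kappa\ge\frac14$, $\Delta t>0$, and set $\kappa^*=\kappa-\frac18$, $C_4=\frac{1}{1-e^{-2}}$, $\gamma^{(0)}=3C_4(1+\kappa)$, and $\alpha_0=\ln\Big(\frac{\gamma^{(0)}+\frac12\kappa}{\gamma^{(0)}-\frac12\kappa}\Big)$ (the unique positive solution of $\frac{e^{-\alpha_0}}{1-e^{-\alpha_0}}+\frac12=\frac{\gamma^{(0)}}{\kappa}$). Suppose $$A\ge \Big(\gamma^{(0)}-\frac{\kappa}{4}\Big)^4\alpha_0^{-2}\varepsilon^{-2}.$$ Then for every real periodic grid function $f$ with zero mean, $$\Big(\frac{\varepsilon^2}{2}+A\Delta t^2\Big)\|\Delta_N f\|_2^2+\kappa^*\|\nabla_N f\|_2^2+\Big\langle\Big(\frac{1}{\Delta t}\mathcal G_N-L_N\Big)f,f\Big\rangle\ge \gamma^{(0)}\|\nabla_N f\|_2^2.$$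
   Context: Setting: $\Omega=(0,1)^2$, $N=2K+1$, $h=1/N$, grid $x_i=ih$, $y_j=jh$; periodic grid functions have discrete Fourier expansions $f_{i,j}=\sum_{k,\ell=-K}^{K}\hat f_{k,\ell}\exp(2\pi\mathrm{i}(kx_i+\ell y_j))$. Spectral operators act as Fourier multipliers: $\mathcal D_{Nx}$, $\mathcal D_{Ny}$ by $2\pi\mathrm{i}k$, $2\pi\mathrm{i}\ell$; $\nabla_N f=(\mathcal D_{Nx}f,\mathcal D_{Ny}f)$; $\Delta_N$ by $-\lambda_{k,\ell}$, $\lambda_{k,\ell}=(2k\pi)^2+(2\ell\pi)^2$. Inner product $\langle f,g\rangle=h^2\sum_{i,j}f_{i,j}g_{i,j}$, $\|f\|_2=\langle f,f\rangle^{1/2}$. $L_N=\varepsilon^2\Delta_N^2-\kappa\Delta_N$ has multiplier $\Lambda_{k,\ell}=\varepsilon^2\lambda_{k,\ell}^2+\kappa\lambda_{k,\ell}$. On zero-mean grid functions, $\mathcal G_N=\Delta tL_N(I-e^{-\Delta tL_N})^{-1}$ is the multiplier $\frac{\Delta t\Lambda_{k,\ell}}{1-e^{-\Delta t\Lambda_{k,\ell}}}$ on modes $(k,\ell)\ne(0,0)$. *)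

theory Defs
  imports Complex_Main
begin

(* Grid: N = 2K+1 points per direction, h = 1/N, x_i = i h, indices i,j in {0..<N}.
   Periodic grid functions are functions nat => nat => real read on {0..<N}^2. *)

definition gridN :: "nat \<Rightarrow> nat" where
  "gridN K = 2 * K + 1"

definition lam :: "int \<Rightarrow> int \<Rightarrow> real" where
  "lam k l = (2 * of_int k * pi)^2 + (2 * of_int l * pi)^2"

(* discrete Fourier coefficient: f_{i,j} = sum_{k,l=-K..K} fhat_{k,l} exp(2 pi i (k x_i + l y_j)) *)
definition dft :: "nat \<Rightarrow> (nat \<Rightarrow> nat \<Rightarrow> real) \<Rightarrow> int \<Rightarrow> int \<Rightarrow> complex" where
  "dft K f k l = (1 / (of_nat (gridN K))^2) *
     (\<Sum>i<gridN K. \<Sum>j<gridN K. complex_of_real (f i j) *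
        cis (- 2 * pi * (of_int k * of_nat i + of_int l * of_nat j) / of_nat (gridN K)))"

(* spectral operator with Fourier multiplier m; applied to real grid functions
   (real part taken: for the multipliers used here the result is real) *)
definition fmult :: "nat \<Rightarrow> (int \<Rightarrow> int \<Rightarrow> complex) \<Rightarrow> (nat \<Rightarrow> nat \<Rightarrow> real) \<Rightarrow> nat \<Rightarrow> nat \<Rightarrow> real" where
  "fmult K m f i j = Re (\<Sum>k\<in>{- int K..int K}. \<Sum>l\<in>{- int K..int K}.
      m k l * dft K f k l *
      cis (2 * pi * (of_int k * of_nat i + of_int l * of_nat j) / of_nat (gridN K)))"

definition DNx :: "nat \<Rightarrow> (nat \<Rightarrow> nat \<Rightarrow> real) \<Rightarrow> nat \<Rightarrow> nat \<Rightarrow> real" where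
  "DNx K = fmult K (\<lambda>k l. \<i> * complex_of_real (2 * pi * of_int k))"

definition DNy :: "nat \<Rightarrow> (nat \<Rightarrow> nat \<Rightarrow> real) \<Rightarrow> nat \<Rightarrow> nat \<Rightarrow> real" where
  "DNy K = fmult K (\<lambda>k l. \<i> * complex_of_real (2 * pi * of_int l))"

definition LapN :: "nat \<Rightarrow> (nat \<Rightarrow> nat \<Rightarrow> real) \<Rightarrow> nat \<Rightarrow> nat \<Rightarrow> real" where
  "LapN K = fmult K (\<lambda>k l. complex_of_real (- lam k l))"

definition LamL :: "real \<Rightarrow> real \<Rightarrow> int \<Rightarrow> int \<Rightarrow> real" where
  "LamL eps kappa k l = eps^2 * (lam k l)^2 + kappa * lam k l"

(* L_N = eps^2 Delta_N^2 - kappa Delta_N *)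
definition LN :: "nat \<Rightarrow> real \<Rightarrow> real \<Rightarrow> (nat \<Rightarrow> nat \<Rightarrow> real) \<Rightarrow> nat \<Rightarrow> nat \<Rightarrow> real" where
  "LN K eps kappa = fmult K (\<lambda>k l. complex_of_real (LamL eps kappa k l))"

(* G_N on zero-mean functions; the (0,0) mode multiplier is irrelevant there and set to 0 *)
definition GN :: "nat \<Rightarrow> real \<Rightarrow> real \<Rightarrow> real \<Rightarrow> (nat \<Rightarrow> nat \<Rightarrow> real) \<Rightarrow> nat \<Rightarrow> nat \<Rightarrow> real" where
  "GN K eps kappa dt = fmult K (\<lambda>k l. if k = 0 \<and> l = 0 then 0 else
      complex_of_real (dt * LamL eps kappa k l / (1 - exp (- dt * LamL eps kappa k l))))"

definition ginner :: "nat \<Rightarrow> (nat \<Rightarrow> nat \<Rightarrow> real) \<Rightarrow> (nat \<Rightarrow> nat \<Rightarrow> real) \<Rightarrow> real" where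
  "ginner K f g = (1 / of_nat (gridN K))^2 * (\<Sum>i<gridN K. \<Sum>j<gridN K. f i j * g i j)"

definition gnorm :: "nat \<Rightarrow> (nat \<Rightarrow> nat \<Rightarrow> real) \<Rightarrow> real" where
  "gnorm K f = sqrt (ginner K f f)"

definition gradnorm2 :: "nat \<Rightarrow> (nat \<Rightarrow> nat \<Rightarrow> real) \<Rightarrow> real" where
  "gradnorm2 K f = (gnorm K (DNx K f))^2 + (gnorm K (DNy K f))^2"

end

theory Submission
  imports Defs
begin

(*
  All operators involved are Fourier multipliers, and by orthogonality of the discrete
  characters every quadratic form in the statement is a sum over the modes (k,l) of a symbol
  times |hat f_{k,l}|^2. It therefore suffices to prove the scalar inequality for each
  lambda = lambda_{k,l} > 0. With x = dt Lambda, the G_N-term contributes Lambda / (e^x - 1).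
  If x <= alpha_0 this term alone is at least (gamma - kappa/2) lambda, which is how alpha_0 is
  chosen. If x > alpha_0, the lower bound on A gives
  A dt^2 lambda >= (gamma - kappa/4)^4 / (u (u + kappa)^2) with u = eps^2 lambda, and the AM-GM
  bound u (u + kappa)^2 (T - u/2) <= (T + kappa/4)^4 for T = gamma - kappa + 1/8 shows that
  this, together with eps^2 lambda^2 / 2 = u lambda / 2, covers the rest.
*)

abbreviation modes :: "nat \<Rightarrow> int set" where
  "modes K \<equiv> {- int K..int K}"

definition grid_char :: "nat \<Rightarrow> int \<Rightarrow> int \<Rightarrow> nat \<Rightarrow> nat \<Rightarrow> complex" where
  "grid_char K k l i j = cis (2 * pi * (of_int k * of_nat i + of_int l * of_nat j) / of_nat (gridN K))"

definition synthesis :: "nat \<Rightarrow> (int \<Rightarrow> int \<Rightarrow> complex) \<Rightarrow> nat \<Rightarrow> nat \<Rightarrow> complex" where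
  "synthesis K c i j = (\<Sum>k\<in>modes K. \<Sum>l\<in>modes K. c k l * grid_char K k l i j)"

lemma gridN_pos: "gridN K > 0"
  by (simp add: gridN_def)

lemma sum_cis_roots_of_unity:
  fixes d :: int and N :: nat
  assumes N: "N > 0" and d: "\<bar>d\<bar> < int N"
  shows "(\<Sum>i<N. cis (2 * pi * (of_int d * of_nat i) / of_nat N)) = (if d = 0 then of_nat N else 0)"
proof (cases "d = 0")
  case False
  define z where "z = cis (2 * pi * of_int d / of_nat N)"
  have powers: "cis (2 * pi * (of_int d * of_nat i) / of_nat N) = z ^ i" for i
    unfolding z_def DeMoivre by (simp add: mult_ac)
  have "z ^ N = 1"
    using N unfolding z_def DeMoivre by simp
  moreover have "z \<noteq> 1"
  proof
    assume "z = 1"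
    then have "cos (2 * pi * of_int d / of_nat N) = 1"
      unfolding z_def by (metis cis.sel(1) one_complex.sel(1))
    then obtain n :: int where "2 * pi * of_int d / of_nat N = of_int n * 2 * pi"
      using cos_one_2pi_int by blast
    then have "of_int d = of_int n * (of_nat N :: real)"
      using N by (simp add: field_simps)
    then have dn: "d = n * int N"
      by (metis of_int_eq_iff of_int_mult of_int_of_nat_eq)
    with False have "n \<noteq> 0" by simp
    then have "\<bar>d\<bar> \<ge> 1 * int N"
      using mult_right_mono[of 1 "\<bar>n\<bar>" "int N"] unfolding dn abs_mult by simp
    with d show False by simp
  qed
  ultimately show ?thesis
    using False geometric_sum[of z N] by (simp add: powers)
qed simp

lemma grid_char_mult_cnj:
  "grid_char K k' l' i j * cnj (grid_char K k l i j) =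
     cis (2 * pi * (of_int (k' - k) * of_nat i) / of_nat (gridN K))
   * cis (2 * pi * (of_int (l' - l) * of_nat j) / of_nat (gridN K))"
  unfolding grid_char_def cis_cnj cis_mult
  using gridN_pos[of K] by (intro arg_cong[where f = cis]) (simp add: field_simps)

lemma sum_grid_char_mult_cnj:
  assumes "k \<in> modes K" "k' \<in> modes K" "l \<in> modes K" "l' \<in> modes K"
  shows "(\<Sum>i<gridN K. \<Sum>j<gridN K. grid_char K k' l' i j * cnj (grid_char K k l i j)) =
           (if k' = k \<and> l' = l then (of_nat (gridN K))\<^sup>2 else 0)"
proof -
  have "\<bar>k' - k\<bar> < int (gridN K)" "\<bar>l' - l\<bar> < int (gridN K)"
    using assms by (auto simp: gridN_def)
  from this[THEN sum_cis_roots_of_unity[OF gridN_pos]] show ?thesis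
    unfolding grid_char_mult_cnj sum_product[symmetric] by (simp add: power2_eq_square)
qed

lemma cnj_grid_char: "cnj (grid_char K k l i j) = grid_char K (-k) (-l) i j"
  unfolding grid_char_def cis_cnj
  using gridN_pos[of K] by (intro arg_cong[where f = cis]) (simp add: field_simps)

lemma dft_eq_sum_cnj_grid_char:
  "dft K f k l = 1 / (of_nat (gridN K))\<^sup>2 *
     (\<Sum>i<gridN K. \<Sum>j<gridN K. complex_of_real (f i j) * cnj (grid_char K k l i j))"
  unfolding dft_def grid_char_def cis_cnj by (simp only: minus_divide_left mult_minus_left)

lemma cnj_dft:
  "cnj (dft K f k l) = 1 / (of_nat (gridN K))\<^sup>2 *
     (\<Sum>i<gridN K. \<Sum>j<gridN K. complex_of_real (f i j) * grid_char K k l i j)"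
  unfolding dft_eq_sum_cnj_grid_char by simp

lemma cnj_dft_eq_dft_uminus: "cnj (dft K f k l) = dft K f (-k) (-l)"
  unfolding cnj_dft dft_eq_sum_cnj_grid_char by (simp add: cnj_grid_char)

lemma sum_swap_pairs:
  "(\<Sum>i\<in>A. \<Sum>j\<in>B. \<Sum>k\<in>C. \<Sum>l\<in>D. F i j k l) = (\<Sum>k\<in>C. \<Sum>l\<in>D. \<Sum>i\<in>A. \<Sum>j\<in>B. F i j k l)"
  by (subst sum.swap, subst (2) sum.swap) (simp add: sum.swap[of _ B])

lemma sum_modes_uminus: "(\<Sum>k\<in>modes K. h (- k)) = (\<Sum>k\<in>modes K. h k)"
  by (rule sum.reindex_bij_witness[of _ uminus uminus]) auto

definition hermitian :: "(int \<Rightarrow> int \<Rightarrow> complex) \<Rightarrow> bool" where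
  "hermitian c \<longleftrightarrow> (\<forall>k l. c (-k) (-l) = cnj (c k l))"

lemma synthesis_real:
  assumes "hermitian c"
  shows "complex_of_real (Re (synthesis K c i j)) = synthesis K c i j"
proof -
  have "cnj (synthesis K c i j) =
          (\<Sum>k\<in>modes K. \<Sum>l\<in>modes K. c (-k) (-l) * grid_char K (-k) (-l) i j)"
    using assms unfolding synthesis_def hermitian_def by (simp add: cnj_grid_char)
  also have "\<dots> = synthesis K c i j"
    unfolding synthesis_def
    by (subst sum_modes_uminus[where h = "\<lambda>k. \<Sum>l\<in>modes K. c k (-l) * grid_char K k (-l) i j"])
       (simp add: sum_modes_uminus[where h = "\<lambda>l. c _ l * grid_char K _ l i j"])
  finally have "synthesis K c i j \<in> \<real>"
    unfolding Reals_cnj_iff .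
  then show ?thesis
    by (rule of_real_Re)
qed

lemma ginner_Re_synthesis:
  "ginner K (\<lambda>i j. Re (synthesis K c i j)) g =
     Re (\<Sum>k\<in>modes K. \<Sum>l\<in>modes K. c k l * cnj (dft K g k l))"
proof -
  let ?N = "gridN K"
  have "ginner K (\<lambda>i j. Re (synthesis K c i j)) g =
          Re (\<Sum>i<?N. \<Sum>j<?N. 1 / (of_nat ?N)\<^sup>2 * (synthesis K c i j * complex_of_real (g i j)))"
    unfolding ginner_def sum_distrib_left[symmetric] by (simp add: power_one_over)
  also have "\<dots> = Re (\<Sum>k\<in>modes K. \<Sum>l\<in>modes K. c k l *
      (1 / (of_nat ?N)\<^sup>2 * (\<Sum>i<?N. \<Sum>j<?N. complex_of_real (g i j) * grid_char K k l i j)))"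
    unfolding synthesis_def sum_distrib_right sum_distrib_left
    by (subst sum_swap_pairs) (simp only: mult_ac)
  finally show ?thesis
    unfolding cnj_dft .
qed

lemma dft_Re_synthesis:
  assumes c: "hermitian c" and k: "k \<in> modes K" and l: "l \<in> modes K"
  shows "dft K (\<lambda>i j. Re (synthesis K c i j)) k l = c k l"
proof -
  let ?N = "gridN K"
  have "(\<Sum>i<?N. \<Sum>j<?N. synthesis K c i j * cnj (grid_char K k l i j)) =
      (\<Sum>k'\<in>modes K. \<Sum>l'\<in>modes K. c k' l' *
         (\<Sum>i<?N. \<Sum>j<?N. grid_char K k' l' i j * cnj (grid_char K k l i j)))"
    unfolding synthesis_def sum_distrib_right sum_distrib_left
    by (subst sum_swap_pairs) (simp add: mult_ac)
  also have "\<dots> = (\<Sum>k'\<in>modes K. \<Sum>l'\<in>modes K.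
                    if k' = k \<and> l' = l then c k l * (of_nat ?N)\<^sup>2 else 0)"
    by (intro sum.cong refl, subst sum_grid_char_mult_cnj) (use k l in auto)
  also have "\<dots> = (\<Sum>k'\<in>modes K. if k' = k then
                    (\<Sum>l'\<in>modes K. if l' = l then c k l * (of_nat ?N)\<^sup>2 else 0) else 0)"
    by (intro sum.cong refl) auto
  also have "\<dots> = c k l * (of_nat ?N)\<^sup>2"
    using k l by simp
  finally show ?thesis
    unfolding dft_eq_sum_cnj_grid_char synthesis_real[OF c] using gridN_pos[of K] by simp
qed

lemma fmult_eq_Re_synthesis:
  "fmult K m f = (\<lambda>i j. Re (synthesis K (\<lambda>k l. m k l * dft K f k l) i j))"
  by (simp add: fun_eq_iff fmult_def synthesis_def grid_char_def)

lemma hermitian_mult_dft: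
  "hermitian m \<Longrightarrow> hermitian (\<lambda>k l. m k l * dft K f k l)"
  by (simp add: hermitian_def cnj_dft_eq_dft_uminus)

lemma ginner_fmult:
  "ginner K (fmult K m f) g = Re (\<Sum>k\<in>modes K. \<Sum>l\<in>modes K. m k l * dft K f k l * cnj (dft K g k l))"
  unfolding fmult_eq_Re_synthesis ginner_Re_synthesis ..

lemma dft_fmult:
  "hermitian m \<Longrightarrow> k \<in> modes K \<Longrightarrow> l \<in> modes K \<Longrightarrow> dft K (fmult K m f) k l = m k l * dft K f k l"
  unfolding fmult_eq_Re_synthesis by (rule dft_Re_synthesis[OF hermitian_mult_dft])

definition spectral_sum :: "nat \<Rightarrow> (int \<Rightarrow> int \<Rightarrow> real) \<Rightarrow> (nat \<Rightarrow> nat \<Rightarrow> real) \<Rightarrow> real" where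
  "spectral_sum K w f = (\<Sum>k\<in>modes K. \<Sum>l\<in>modes K. w k l * (cmod (dft K f k l))\<^sup>2)"

lemma ginner_fmult_self:
  "ginner K (fmult K m f) f = spectral_sum K (\<lambda>k l. Re (m k l)) f"
proof -
  have "ginner K (fmult K m f) f =
          Re (\<Sum>k\<in>modes K. \<Sum>l\<in>modes K. m k l * complex_of_real ((cmod (dft K f k l))\<^sup>2))"
    unfolding ginner_fmult mult.assoc complex_norm_square ..
  then show ?thesis
    unfolding spectral_sum_def Re_sum by simp
qed

lemma gnorm_fmult_sq:
  assumes "hermitian m"
  shows "(gnorm K (fmult K m f))\<^sup>2 = spectral_sum K (\<lambda>k l. (cmod (m k l))\<^sup>2) f"
proof -
  have "(gnorm K (fmult K m f))\<^sup>2 = ginner K (fmult K m f) (fmult K m f)"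
    unfolding gnorm_def ginner_def by (simp add: sum_nonneg)
  also have "\<dots> = Re (\<Sum>k\<in>modes K. \<Sum>l\<in>modes K. m k l * dft K f k l * cnj (m k l * dft K f k l))"
    unfolding ginner_fmult by (simp add: dft_fmult[OF assms])
  finally show ?thesis
    unfolding spectral_sum_def complex_norm_square[symmetric] by (simp add: norm_mult power_mult_distrib)
qed

lemma spectral_sum_add:
  "spectral_sum K (\<lambda>k l. v k l + w k l) f = spectral_sum K v f + spectral_sum K w f"
  by (simp add: spectral_sum_def distrib_right sum.distrib)

lemma spectral_sum_diff:
  "spectral_sum K (\<lambda>k l. v k l - w k l) f = spectral_sum K v f - spectral_sum K w f"
  by (simp add: spectral_sum_def left_diff_distrib sum_subtractf)

lemma spectral_sum_cmult:
  "spectral_sum K (\<lambda>k l. c * w k l) f = c * spectral_sum K w f"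
  by (simp add: spectral_sum_def sum_distrib_left mult.assoc)

lemma spectral_sum_mono:
  "(\<And>k l. k \<in> modes K \<Longrightarrow> l \<in> modes K \<Longrightarrow> v k l \<le> w k l) \<Longrightarrow>
     spectral_sum K v f \<le> spectral_sum K w f"
  unfolding spectral_sum_def by (intro sum_mono mult_right_mono) auto

lemma poly_le_fourth_power:
  fixes u T kappa :: real
  assumes u: "u > 0" and uT: "u < 2 * T" and kappa: "kappa > 0" and T: "T \<ge> 2 * kappa"
  shows "u * (u + kappa)\<^sup>2 * (T - u / 2) \<le> (T + kappa / 4) ^ 4"
proof -
  define X where "X = (3 * T - u) / 2"
  define Y where "Y = (u + kappa) / 2"
  have "X > 0" "Y > 0"
    using u uT kappa by (auto simp: X_def Y_def)
  have "u * (u + kappa)\<^sup>2 * (T - u / 2) = (8 / 3) * (3 / 4 * u * (2 * T - u)) * Y\<^sup>2"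
    by (simp add: Y_def power2_eq_square algebra_simps)
  also have "\<dots> \<le> (8 / 3) * X\<^sup>2 * Y\<^sup>2"
  proof -
    have "X\<^sup>2 - 3 / 4 * u * (2 * T - u) = ((3 * T - 2 * u) / 2)\<^sup>2"
      by (simp add: X_def power2_eq_square field_simps)
    then have "3 / 4 * u * (2 * T - u) \<le> X\<^sup>2"
      by (metis diff_ge_0_iff_ge zero_le_power2)
    then show ?thesis
      by (intro mult_right_mono mult_left_mono) auto
  qed
  also have "\<dots> = (8 / 3) * (X * Y)\<^sup>2"
    by (simp add: power_mult_distrib)
  also have "\<dots> \<le> (8 / 3) * ((3 * T + kappa) / 4) ^ 4"
  proof -
    have "((3 * T + kappa) / 4)\<^sup>2 - X * Y = ((X - Y) / 2)\<^sup>2"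
      by (simp add: X_def Y_def power2_eq_square field_simps)
    then have "X * Y \<le> ((3 * T + kappa) / 4)\<^sup>2"
      by (metis diff_ge_0_iff_ge zero_le_power2)
    then have "(X * Y)\<^sup>2 \<le> (((3 * T + kappa) / 4)\<^sup>2)\<^sup>2"
      using \<open>X > 0\<close> \<open>Y > 0\<close> by (intro power_mono) auto
    then show ?thesis
      by simp
  qed
  also have "\<dots> \<le> (T + kappa / 4) ^ 4"
  proof -
    have "(32 / 25) * ((3 * T + kappa) / 4) \<le> T + kappa / 4"
      using T kappa by simp
    then have "((32 / 25) * ((3 * T + kappa) / 4)) ^ 4 \<le> (T + kappa / 4) ^ 4"
      using T kappa by (intro power_mono) auto
    then have "(32 / 25) ^ 4 * ((3 * T + kappa) / 4) ^ 4 \<le> (T + kappa / 4) ^ 4"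
      by (simp only: power_mult_distrib)
    moreover have "(8 / 3) * ((3 * T + kappa) / 4) ^ 4 \<le> (32 / 25) ^ 4 * ((3 * T + kappa) / 4) ^ 4"
      using T kappa by (intro mult_right_mono) (auto simp: power4_eq_xxxx)
    ultimately show ?thesis
      by linarith
  qed
  finally show ?thesis .
qed

lemma gap_le_of_fourth_power_bound:
  fixes u T kappa M :: real
  assumes u: "u > 0" and kappa: "kappa > 0" and T: "T \<ge> 2 * kappa"
    and M: "(T + kappa / 4) ^ 4 \<le> M * (u * (u + kappa)\<^sup>2)"
  shows "T - u / 2 \<le> M"
proof -
  have pos: "u * (u + kappa)\<^sup>2 > 0"
    using u kappa by simp
  have "0 \<le> (T + kappa / 4) ^ 4"
    using T kappa by simp
  with M have "0 \<le> M * (u * (u + kappa)\<^sup>2)"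
    by linarith
  with pos have "M \<ge> 0"
    by (simp add: zero_le_mult_iff)
  show ?thesis
  proof (cases "u < 2 * T")
    case True
    then have "(T - u / 2) * (u * (u + kappa)\<^sup>2) \<le> M * (u * (u + kappa)\<^sup>2)"
      using poly_le_fourth_power[OF u True kappa T] M by (simp add: mult_ac)
    then show ?thesis
      using pos by (rule mult_right_le_imp_le)
  qed (use \<open>M \<ge> 0\<close> in simp)
qed

lemma G_symbol_minus_eq:
  fixes dt L :: real
  assumes "dt > 0" "L > 0"
  shows "(1 / dt) * (dt * L / (1 - exp (- dt * L))) - L = L / (exp (dt * L) - 1)"
proof -
  have "exp (dt * L) > 1"
    using assms by simp
  moreover have "1 - exp (- dt * L) = (exp (dt * L) - 1) / exp (dt * L)"
    by (simp add: exp_minus field_simps)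
  ultimately show ?thesis
    using assms by (simp add: field_simps)
qed

lemma div_exp_minus_one_ge:
  fixes x g kappa L :: real
  assumes x: "x > 0" and kappa: "kappa > 0" and g: "g > kappa / 2" and L: "L \<ge> 0"
    and exp_le: "exp x \<le> (g + kappa / 2) / (g - kappa / 2)"
  shows "L * (g - kappa / 2) / kappa \<le> L / (exp x - 1)"
proof -
  have "exp x - 1 \<le> kappa / (g - kappa / 2)"
    using exp_le g by (simp add: field_simps)
  then have "L / (kappa / (g - kappa / 2)) \<le> L / (exp x - 1)"
    using x L kappa g by (intro divide_left_mono) auto
  then show ?thesis
    by simp
qed

lemma mode_bound:
  fixes eps kappa dt A g lam L :: real
  assumes eps: "eps > 0" and kappa: "kappa \<ge> 1 / 4" and dt: "dt > 0" and lam: "lam > 0"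
    and g: "g \<ge> 3 * kappa"
    and A: "(g - kappa / 4) ^ 4 \<le> A * eps\<^sup>2 * (ln ((g + kappa / 2) / (g - kappa / 2)))\<^sup>2"
    and L: "L = eps\<^sup>2 * lam\<^sup>2 + kappa * lam"
  shows "g * lam \<le> (eps\<^sup>2 / 2 + A * dt\<^sup>2) * lam\<^sup>2 + (kappa - 1 / 8) * lam
                    + ((1 / dt) * (dt * L / (1 - exp (- dt * L))) - L)"
proof -
  define a where "a = ln ((g + kappa / 2) / (g - kappa / 2))"
  define u where "u = eps\<^sup>2 * lam"
  have L_eq: "L = lam * (u + kappa)"
    by (simp add: L u_def power2_eq_square algebra_simps)
  have "u > 0"
    using eps lam by (simp add: u_def)
  then have "L > 0"
    using lam kappa by (simp add: L_eq)
  have a: "a > 0"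
    using g kappa by (simp add: a_def)
  have "0 \<le> (g - kappa / 4) ^ 4"
    using g kappa by simp
  also have "\<dots> \<le> A * (eps\<^sup>2 * a\<^sup>2)"
    using A unfolding a_def by (simp add: mult.assoc)
  finally have "0 \<le> A * (eps\<^sup>2 * a\<^sup>2)" .
  moreover have "eps\<^sup>2 * a\<^sup>2 > 0"
    using eps a by simp
  ultimately have "A \<ge> 0"
    by (simp add: zero_le_mult_iff)
  have Q: "(1 / dt) * (dt * L / (1 - exp (- dt * L))) - L = L / (exp (dt * L) - 1)"
    using dt \<open>L > 0\<close> by (rule G_symbol_minus_eq)
  have "exp (dt * L) > 1"
    using dt \<open>L > 0\<close> by simp
  show ?thesis
  proof (cases "dt * L \<le> a")
    case True
    then have "exp (dt * L) \<le> exp a"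
      by simp
    also have "exp a = (g + kappa / 2) / (g - kappa / 2)"
      using g kappa by (simp add: a_def)
    finally have "L * (g - kappa / 2) / kappa \<le> L / (exp (dt * L) - 1)"
      using dt \<open>L > 0\<close> kappa g by (intro div_exp_minus_one_ge) auto
    moreover have "lam * (g - kappa / 2) \<le> L * (g - kappa / 2) / kappa"
      using lam kappa g \<open>u > 0\<close> by (simp add: L_eq field_simps)
    moreover have "0 \<le> (eps\<^sup>2 / 2 + A * dt\<^sup>2) * lam\<^sup>2"
      using \<open>A \<ge> 0\<close> by simp
    moreover have "lam / 4 \<le> kappa * lam"
      using kappa lam by simp
    ultimately show ?thesis
      unfolding Q by (simp add: algebra_simps)
  next
    case False
    have "(g - kappa / 4) ^ 4 \<le> A * eps\<^sup>2 * (dt * L)\<^sup>2"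
      using A False a \<open>A \<ge> 0\<close> unfolding a_def[symmetric]
      by (elim order.trans, intro mult_left_mono power_mono) auto
    also have "\<dots> = (A * dt\<^sup>2 * lam) * (u * (u + kappa)\<^sup>2)"
      by (simp add: L_eq u_def power2_eq_square algebra_simps)
    finally have "(g - kappa + 1 / 8 + kappa / 4) ^ 4 \<le> (A * dt\<^sup>2 * lam) * (u * (u + kappa)\<^sup>2)"
      using kappa g by (elim order.trans[rotated], intro power_mono) auto
    then have "(g - kappa + 1 / 8) - u / 2 \<le> A * dt\<^sup>2 * lam"
      using \<open>u > 0\<close> kappa g
      by (intro gap_le_of_fourth_power_bound[where kappa = kappa]) auto
    then have "(g - kappa + 1 / 8) * lam \<le> (u / 2 + A * dt\<^sup>2 * lam) * lam"
      using lam by (intro mult_right_mono) auto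
    moreover have "0 \<le> L / (exp (dt * L) - 1)"
      using \<open>L > 0\<close> \<open>exp (dt * L) > 1\<close> by simp
    ultimately show ?thesis
      unfolding Q by (simp add: u_def power2_eq_square algebra_simps)
  qed
qed

lemma lam_pos: "\<not> (k = 0 \<and> l = 0) \<Longrightarrow> lam k l > 0"
  unfolding lam_def by (auto intro: add_pos_nonneg add_nonneg_pos)

lemma gnorm_LapN_sq: "(gnorm K (LapN K f))\<^sup>2 = spectral_sum K (\<lambda>k l. (lam k l)\<^sup>2) f"
proof -
  have "hermitian (\<lambda>k l. complex_of_real (- lam k l))"
    by (simp add: hermitian_def lam_def)
  then show ?thesis
    unfolding LapN_def by (simp add: gnorm_fmult_sq)
qed

lemma gradnorm2_eq_spectral_sum: "gradnorm2 K f = spectral_sum K lam f"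
proof -
  have "hermitian (\<lambda>k l. \<i> * complex_of_real (2 * pi * of_int k))"
    "hermitian (\<lambda>k l. \<i> * complex_of_real (2 * pi * of_int l))"
    by (simp_all add: hermitian_def)
  then show ?thesis
    unfolding gradnorm2_def DNx_def DNy_def
    by (simp add: gnorm_fmult_sq spectral_sum_add[symmetric] norm_mult power_mult_distrib)
       (simp add: lam_def[abs_def] power_mult_distrib mult_ac)
qed

lemma ginner_GN_minus_LN:
  "ginner K (\<lambda>i j. (1 / dt) * GN K eps kappa dt f i j - LN K eps kappa f i j) f =
     spectral_sum K (\<lambda>k l. (1 / dt) * (if k = 0 \<and> l = 0 then 0 else
         dt * LamL eps kappa k l / (1 - exp (- dt * LamL eps kappa k l))) - LamL eps kappa k l) f"
proof -
  have "ginner K (\<lambda>i j. (1 / dt) * GN K eps kappa dt f i j - LN K eps kappa f i j) f =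
          (1 / dt) * ginner K (GN K eps kappa dt f) f - ginner K (LN K eps kappa f) f"
    unfolding ginner_def by (simp add: sum_subtractf sum_distrib_left algebra_simps)
  then show ?thesis
    unfolding GN_def LN_def ginner_fmult_self spectral_sum_diff spectral_sum_cmult
    by (simp add: if_distrib[of Re] cong: if_cong)
qed

lemma le_mult_sq_of_ge_powi:
  fixes A B a e :: real
  assumes "a \<noteq> 0" "e \<noteq> 0" "A \<ge> B * a powi (-2) * e powi (-2)"
  shows "B \<le> A * e\<^sup>2 * a\<^sup>2"
  using assms by (simp add: power_int_minus field_simps)

theorem proposition2p2:
  fixes K :: nat and eps kappa dt A :: real and f :: "nat \<Rightarrow> nat \<Rightarrow> real"
  assumes eps: "eps > 0" and kap: "kappa \<ge> 1/4" and dt: "dt > 0"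
    and A: "A \<ge> (3 * (1 / (1 - exp (-2))) * (1 + kappa) - kappa / 4) ^ 4
               * (ln ((3 * (1 / (1 - exp (-2))) * (1 + kappa) + kappa / 2)
                     / (3 * (1 / (1 - exp (-2))) * (1 + kappa) - kappa / 2))) powi (-2)
               * eps powi (-2)"
    and mean0: "(\<Sum>i<gridN K. \<Sum>j<gridN K. f i j) = 0"
  shows "(eps^2 / 2 + A * dt^2) * (gnorm K (LapN K f))^2
         + (kappa - 1/8) * gradnorm2 K f
         + ginner K (\<lambda>i j. (1 / dt) * GN K eps kappa dt f i j - LN K eps kappa f i j) f
         \<ge> 3 * (1 / (1 - exp (-2))) * (1 + kappa) * gradnorm2 K f"
proof -
  define g where "g = 3 * (1 / (1 - exp (-2::real))) * (1 + kappa)"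
  have "1 \<le> 1 / (1 - exp (-2::real))"
    by simp
  then have "3 * 1 * (1 + kappa) \<le> g"
    using kap unfolding g_def by (intro mult_right_mono mult_left_mono) auto
  then have g: "g \<ge> 3 * kappa"
    by simp
  have "1 < (g + kappa / 2) / (g - kappa / 2)"
    using g kap by (simp add: field_simps)
  then have "ln ((g + kappa / 2) / (g - kappa / 2)) > 0"
    by (rule ln_gt_zero)
  with A eps have A': "(g - kappa / 4) ^ 4 \<le> A * eps\<^sup>2 * (ln ((g + kappa / 2) / (g - kappa / 2)))\<^sup>2"
    unfolding g_def[symmetric] by (intro le_mult_sq_of_ge_powi) auto
  have "spectral_sum K (\<lambda>k l. g * lam k l) f \<le>
      spectral_sum K (\<lambda>k l. (eps\<^sup>2 / 2 + A * dt\<^sup>2) * (lam k l)\<^sup>2 + (kappa - 1 / 8) * lam k l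
        + ((1 / dt) * (if k = 0 \<and> l = 0 then 0 else
             dt * LamL eps kappa k l / (1 - exp (- dt * LamL eps kappa k l))) - LamL eps kappa k l)) f"
    using mode_bound[OF eps kap dt lam_pos g A'] by (intro spectral_sum_mono) (auto simp: LamL_def lam_def)
  then show ?thesis
    unfolding gnorm_LapN_sq gradnorm2_eq_spectral_sum ginner_GN_minus_LN g_def[symmetric]
    by (simp add: spectral_sum_add spectral_sum_cmult)
qed

end
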